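(* Let $P^1(z) = \tfrac12 z(1+z)$ and let $\mathcal K^1$ be the filled Julia set of $P^1$ (equivalently, the closure of the basin of attraction $U^1$ of the attracting fixed point $0$ of $P^1$). Fix bounds $d \ge 2$, $K \ge 2$, $M \ge \tfrac12$ and an escape radius $R$ for these bounds. Then there exist $\lambda > 1$ depending only on $P^1$ and $c > 0$ depending only on $d, K, M$ and $P^1$ such that the following holds: if $\{P_m\}_{m=1}^\infty$ is any bounded sequence of polynomials with bounds $d,K,M$ and $N \ge 1$ is such that $P_1 = P_2 = \cdots = P_N = P^1$, then \[ \mathrm m\big(\mathcal S^N \setminus \mathcal K^1\big) < c\,\lambda^{-N}, \] where $\mathcal S^N = Q_N^{-1}(\mathrm D(0,R))$ and $\mathrm m$ denotes two-dimensional Lebesgue measure.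
   Context: A bounded sequence of polynomials with bounds $d \ge 2$, $K \ge 1$, $M \ge 0$ is a sequence $\{P_m\}_{m=1}^\infty$ with $P_m(z) = a_{d_m,m}z^{d_m} + \dots + a_{0,m}$, $2 \le d_m \le d$, $1/K \le |a_{d_m,m}| < K$ and $|a_{k,m}| \le M$ for $0 \le k \le d_m - 1$. $Q_{m,n} = P_n \circ \cdots \circ P_{m+1}$ and $Q_N = Q_{0,N}$. An escape radius for the bounds is a number $R>0$, depending only on $d,K,M$, such that for every bounded sequence with these bounds, every $m \ge 0$ and every $|z| > R$, $|Q_{m,n}(z)| \to \infty$ as $n \to \infty$. $\mathrm D(a,r)$ denotes the open disc of centre $a$ and radius $r$. *)

theory Defs
  imports "HOL-Analysis.Analysis" "HOL-Computational_Algebra.Polynomial"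
begin

text \<open>A sequence of polynomials is a function P :: nat => complex poly; only P m with m >= 1
  is used (P 0 is ignored).\<close>

definition bounded_poly_seq :: "nat \<Rightarrow> real \<Rightarrow> real \<Rightarrow> (nat \<Rightarrow> complex poly) \<Rightarrow> bool" where
  "bounded_poly_seq d K M P \<longleftrightarrow>
     (\<forall>m\<ge>1. 2 \<le> degree (P m) \<and> degree (P m) \<le> d
        \<and> 1 / K \<le> cmod (lead_coeff (P m)) \<and> cmod (lead_coeff (P m)) < K
        \<and> (\<forall>k < degree (P m). cmod (coeff (P m) k) \<le> M))"

text \<open>Q P m n = P_n o ... o P_(m+1) (identity when n <= m).\<close>
fun Qc :: "(nat \<Rightarrow> complex poly) \<Rightarrow> nat \<Rightarrow> nat \<Rightarrow> complex \<Rightarrow> complex" where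
  "Qc P m 0 z = z"
| "Qc P m (Suc n) z = (if Suc n \<le> m then z else poly (P (Suc n)) (Qc P m n z))"

definition escape_radius :: "nat \<Rightarrow> real \<Rightarrow> real \<Rightarrow> real \<Rightarrow> bool" where
  "escape_radius d K M R \<longleftrightarrow> R > 0 \<and>
     (\<forall>P. bounded_poly_seq d K M P \<longrightarrow>
        (\<forall>m z. cmod z > R \<longrightarrow> filterlim (\<lambda>n. cmod (Qc P m n z)) at_top sequentially))"

definition P1 :: "complex poly" where
  "P1 = [:0, 1/2, 1/2:]"

definition filled_julia :: "complex poly \<Rightarrow> complex set" where
  "filled_julia p = {z. bounded (range (\<lambda>n. (poly p ^^ n) z))}"

end

theory Submission
  imports Defs
begin

(* If P_1 = ... = P_N = P^1, then S^N \<setminus> K^1 is the set E_N of points outside the filled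
   Julia set K^1 whose N-th P^1-iterate lies in D(0,R); it depends neither on the bounds
   d, K, M nor on P_m for m > N.  Since K^1 is completely invariant, E_(N+1) is the
   P^1-preimage of E_N.  The disc D(-1/2, 3/2) is forward invariant, hence contained in K^1,
   so on E_(N+1) we have |P^1'(z)| = |z + 1/2| \<ge> 3/2 and the Jacobian of P^1 is at least 9/4.
   P^1 is injective on each of the half-planes Re z > -1/2 and Re z < -1/2, so change of
   variables on both halves yields |E_(N+1)| \<le> 2 \<cdot> 4/9 |E_N|, whence |E_N| \<le> (8/9)^N |E_0|. *)

lemma range_orbit: "range (\<lambda>n. (g ^^ n) z) = insert z (range (\<lambda>n. (g ^^ n) (g z)))"
proof -
  have shift: "range h = insert (h 0) (range (\<lambda>n. h (Suc n)))" for h :: "nat \<Rightarrow> 'a"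
    by (auto simp: image_iff) (metis not0_implies_Suc)
  show ?thesis by (subst shift) (simp add: funpow_Suc_right del: funpow.simps)
qed

lemma filled_julia_iff_image: "z \<in> filled_julia p \<longleftrightarrow> poly p z \<in> filled_julia p"
  unfolding filled_julia_def by (simp add: range_orbit[of _ z] bounded_insert)

lemma continuous_on_funpow:
  fixes g :: "'a::topological_space \<Rightarrow> 'a"
  assumes "continuous_on UNIV g" shows "continuous_on UNIV (g ^^ n)"
proof (induction n)
  case (Suc n)
  then show ?case using continuous_on_compose[of UNIV "g ^^ n" g] assms
    by (simp add: continuous_on_subset)
qed (simp add: continuous_on_id)

lemma borel_measurable_poly_funpow [measurable]:
  fixes p :: "complex poly" shows "(poly p ^^ n) \<in> borel_measurable borel"
  using continuous_on_poly[OF continuous_on_id, of UNIV p]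
  by (intro borel_measurable_continuous_onI continuous_on_funpow) simp

lemma filled_julia_borel [measurable]: "filled_julia p \<in> sets borel"
proof -
  have "filled_julia p = (\<Union>B::nat. \<Inter>n. {z. cmod ((poly p ^^ n) z) \<le> real B})"
    unfolding filled_julia_def bounded_iff by (auto, meson order_trans real_nat_ceiling_ge)
  then show ?thesis by simp
qed

(* The change-of-variables theorem of the library lives on real^'n, so the complex plane
   is identified with real^2 by the isometry of_R2, with inverse to_R2. *)
definition of_R2 :: "real^2 \<Rightarrow> complex" where
  "of_R2 v = Complex (v$1) (v$2)"

definition to_R2 :: "complex \<Rightarrow> real^2" where
  "to_R2 z = vector [Re z, Im z]"

lemma to_R2_nth [simp]: "to_R2 z $ 1 = Re z" "to_R2 z $ 2 = Im z"
  by (simp_all add: to_R2_def)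

lemma of_R2_Re_Im [simp]: "Re (of_R2 v) = v$1" "Im (of_R2 v) = v$2"
  by (simp_all add: of_R2_def)

lemma of_to_R2 [simp]: "of_R2 (to_R2 z) = z"
  by (simp add: complex_eq_iff)

lemma to_of_R2 [simp]: "to_R2 (of_R2 v) = v"
  by (simp add: vec_eq_iff forall_2)

lemma norm_of_R2: "cmod (of_R2 v) = norm v"
  unfolding norm_vec_def L2_set_def by (simp add: sum_2 cmod_def)

lemma bounded_linear_of_R2: "bounded_linear of_R2"
  by (rule bounded_linear_intro[where K=1]) (auto simp: complex_eq_iff norm_of_R2)

lemma bounded_linear_to_R2: "bounded_linear to_R2"
proof -
  have "norm (to_R2 z) = cmod z" for z using norm_of_R2[of "to_R2 z"] by simp
  then show ?thesis by (intro bounded_linear_intro[where K=1]) (auto simp: vec_eq_iff forall_2)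
qed

lemma of_R2_borel [measurable]: "of_R2 \<in> borel_measurable borel"
  using bounded_linear_of_R2 linear_continuous_on borel_measurable_continuous_onI by blast

lemma emeasure_box_R2:
  "emeasure lborel (box (a::real^2) b) =
    (if a$1 \<le> b$1 \<and> a$2 \<le> b$2 then ennreal ((b$1 - a$1) * (b$2 - a$2)) else 0)"
proof -
  have Basis_R2: "(\<Prod>i\<in>(Basis::(real^2) set). f i) = f (axis 1 1) * f (axis 2 1)"
    "(\<forall>i\<in>(Basis::(real^2) set). P i) \<longleftrightarrow> P (axis 1 1) \<and> P (axis 2 1)" for f P
    by (simp_all add: Basis_vec_def UNIV_2 axis_eq_axis mult.commute conj_commute)
  show ?thesis by (simp add: emeasure_lborel_box_eq Basis_R2 inner_axis cong: if_cong)
qed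

lemma vimage_of_R2_box: "of_R2 -` box l u = box (to_R2 l) (to_R2 u)"
  by (auto simp: mem_box Basis_complex_def of_R2_def Basis_vec_def forall_2 axis_def inner_vec_def sum_2)

lemma lborel_complex: "(lborel :: complex measure) = distr lborel borel of_R2"
proof (rule lborel_eqI)
  fix l u :: complex
  assume le: "\<And>b. b \<in> Basis \<Longrightarrow> l \<bullet> b \<le> u \<bullet> b"
  have "Re l \<le> Re u" "Im l \<le> Im u"
    using le[of 1] le[of \<i>] by (auto simp: Basis_complex_def)
  then show "emeasure (distr lborel borel of_R2) (box l u) = (\<Prod>b\<in>Basis. (u - l) \<bullet> b)"
    by (simp add: emeasure_distr vimage_of_R2_box emeasure_box_R2 Basis_complex_def ennreal_mult)
qed simp

lemma emeasure_complex_eq_R2: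
  assumes "A \<in> sets borel"
  shows "emeasure lborel A = emeasure lborel (of_R2 -` A)"
  using assms by (simp add: lborel_complex emeasure_distr)

lemma has_derivative_complex_as_R2:
  assumes "(f has_field_derivative c) (at (of_R2 v))"
  shows "((to_R2 \<circ> f \<circ> of_R2) has_derivative (\<lambda>h. to_R2 (c * of_R2 h))) (at v within S)"
proof -
  have "(of_R2 has_derivative of_R2) (at v within S)"
    using bounded_linear_of_R2 bounded_linear_imp_has_derivative by blast
  moreover have "(f has_derivative (\<lambda>h. c * h)) (at (of_R2 v) within of_R2 ` S)"
    using has_field_derivative_at_within[OF assms] unfolding has_field_derivative_def .
  moreover have "(to_R2 has_derivative to_R2) (at (f (of_R2 v)) within f ` of_R2 ` S)"
    using bounded_linear_to_R2 bounded_linear_imp_has_derivative by blast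
  ultimately have "((to_R2 \<circ> f \<circ> of_R2) has_derivative (to_R2 \<circ> (\<lambda>h. c * h) \<circ> of_R2)) (at v within S)"
    by (intro diff_chain_within)
  then show ?thesis by (simp add: o_def)
qed

lemma det_complex_mult_R2: "det (matrix (\<lambda>h. to_R2 (c * of_R2 h))) = (cmod c)^2"
proof -
  have "matrix (\<lambda>h. to_R2 (c * of_R2 h)) =
      (\<chi> i j. if i = 1 then (if j = 1 then Re c else - Im c) else (if j = 1 then Im c else Re c))"
    unfolding matrix_def by (auto simp: vec_eq_iff forall_2 of_R2_def axis_def)
  then show ?thesis by (simp add: det_2 cmod_def power2_eq_square)
qed

lemma inj_on_as_R2: "inj_on f A \<Longrightarrow> inj_on (to_R2 \<circ> f \<circ> of_R2) (of_R2 -` A)"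
  by (rule inj_onI) (metis comp_apply inj_onD of_to_R2 to_of_R2 vimageE)

lemma measure_le_image_measure:
  fixes g :: "real^'n::{finite,wellorder} \<Rightarrow> real^'n::_"
  assumes S: "S \<in> lmeasurable" and T: "T \<in> lmeasurable" and image: "g ` S \<subseteq> T"
    and der: "\<And>x. x \<in> S \<Longrightarrow> (g has_derivative g' x) (at x within S)"
    and inj: "inj_on g S"
    and jac: "\<And>x. x \<in> S \<Longrightarrow> k \<le> \<bar>det (matrix (g' x))\<bar>"
  shows "k * measure lebesgue S \<le> measure lebesgue T"
proof -
  have "g differentiable_on S"
    using der by (auto simp: differentiable_on_def differentiable_def)
  then have "g ` S \<in> sets lebesgue"
    using S by (intro differentiable_image_in_sets_lebesgue) auto
  then have gS: "g ` S \<in> lmeasurable"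
    using T image fmeasurableI2 by blast
  then have int: "(\<lambda>x. \<bar>det (matrix (g' x))\<bar>) integrable_on S"
    using measurable_differentiable_image_eq[OF _ der inj] S by blast
  have "k * measure lebesgue S = integral S (\<lambda>x. k)"
    using lmeasure_integral[OF S] integral_cmul[of S k "\<lambda>x. 1::real"] by simp
  also have "\<dots> \<le> integral S (\<lambda>x. \<bar>det (matrix (g' x))\<bar>)"
    using integrable_on_const[OF S] int jac by (rule integral_le)
  also have "\<dots> = measure lebesgue (g ` S)"
    using measure_differentiable_image_eq[OF _ der inj int] S by simp
  also have "\<dots> \<le> measure lebesgue T"
    using measure_mono_fmeasurable[OF image] gS T by blast
  finally show ?thesis .
qed

abbreviation p1 :: "complex \<Rightarrow> complex" where "p1 \<equiv> poly P1"

lemma p1_eq: "p1 z = z * (z + 1) / 2"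
  by (simp add: P1_def algebra_simps)

lemma p1_centered: "p1 z + 1/2 = (z + 1/2)^2 / 2 + 3/8"
  by (simp add: p1_eq power2_eq_square field_simps)

lemma p1_eq_iff: "p1 z = p1 w \<longleftrightarrow> z = w \<or> z + w = -1"
proof -
  have "p1 z - p1 w = (z - w) * (z + w + 1) / 2"
    by (simp add: p1_eq field_simps)
  then have "p1 z = p1 w \<longleftrightarrow> z - w = 0 \<or> z + w + 1 = 0"
    by (metis divide_eq_0_iff eq_iff_diff_eq_0 mult_eq_0_iff zero_neq_numeral)
  also have "\<dots> \<longleftrightarrow> z = w \<or> z + w = -1"
    by (metis add_diff_cancel_right' diff_0 eq_iff_diff_eq_0 diff_add_cancel)
  finally show ?thesis .
qed

lemma p1_deriv: "(p1 has_field_derivative (z + 1/2)) (at z)"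
proof -
  have "((\<lambda>z. z * (z + 1) / 2) has_field_derivative (z + 1/2)) (at z)"
    by (auto intro!: derivative_eq_intros simp: field_simps)
  then show ?thesis by (simp add: p1_eq[abs_def])
qed

lemma p1_maps_disc:
  assumes "cmod (z + 1/2) < 3/2" shows "cmod (p1 z + 1/2) < 3/2"
proof -
  have "(cmod (z + 1/2))^2 < (3/2)^2"
    using assms by (intro power_strict_mono) auto
  have "cmod (p1 z + 1/2) \<le> cmod ((z + 1/2)^2 / 2) + cmod (3/8 :: complex)"
    unfolding p1_centered by (rule norm_triangle_ineq)
  also have "\<dots> = (cmod (z + 1/2))^2 / 2 + 3/8"
    by (simp add: norm_power)
  also have "\<dots> < 3/2"
    using \<open>(cmod (z + 1/2))^2 < (3/2)^2\<close> by (simp add: power_divide)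
  finally show ?thesis .
qed

lemma disc_subset_filled_julia:
  assumes "cmod (z + 1/2) < 3/2" shows "z \<in> filled_julia P1"
proof -
  have "cmod ((p1 ^^ n) z + 1/2) < 3/2" for n
    by (induction n) (simp_all only: funpow.simps o_apply id_apply assms p1_maps_disc)
  then have "range (\<lambda>n. (p1 ^^ n) z) \<subseteq> cball (-1/2) (3/2)"
    by (auto simp: dist_norm norm_minus_commute less_imp_le)
  then show ?thesis unfolding filled_julia_def using bounded_cball bounded_subset by blast
qed

lemma p1_norm_grows: "3 \<le> cmod w \<Longrightarrow> cmod w \<le> cmod (p1 w)"
proof -
  assume "3 \<le> cmod w"
  then have "2 \<le> cmod (w + 1)" using norm_triangle_ineq2[of w "-1"] by simp
  then have "cmod w * 2 \<le> cmod w * cmod (w + 1)" by (simp add: mult_left_mono)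
  then show ?thesis by (simp add: p1_eq norm_mult norm_divide)
qed

lemma p1_orbit_ge:
  assumes "3 \<le> cmod z" shows "cmod z \<le> cmod ((p1 ^^ n) z)"
proof (induction n)
  case (Suc n)
  then have "cmod z \<le> cmod (p1 ((p1 ^^ n) z))"
    using assms p1_norm_grows[of "(p1 ^^ n) z"] by linarith
  then show ?case by simp
qed simp

lemma p1_inj_on_half_planes:
  "inj_on p1 {z. Re z > -1/2}" "inj_on p1 {z. Re z < -1/2}"
proof -
  have "z + w \<noteq> -1" if "Re z > -1/2 \<and> Re w > -1/2 \<or> Re z < -1/2 \<and> Re w < -1/2" for z w
    using that by (auto simp: complex_eq_iff)
  then show "inj_on p1 {z. Re z > -1/2}" "inj_on p1 {z. Re z < -1/2}"
    by (auto intro!: inj_onI simp: p1_eq_iff)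
qed

definition escape_set :: "real \<Rightarrow> nat \<Rightarrow> complex set" where
  "escape_set R N = {z. cmod ((p1 ^^ N) z) < R} - filled_julia P1"

lemma escape_set_borel [measurable]: "escape_set R N \<in> sets borel"
  unfolding escape_set_def by measurable

lemma escape_set_Suc: "escape_set R (Suc N) = p1 -` escape_set R N"
  unfolding escape_set_def using filled_julia_iff_image[of _ P1]
  by (auto simp: funpow_Suc_right simp del: funpow.simps)

lemma escape_set_bounded: "z \<in> escape_set R N \<Longrightarrow> cmod z < max R 3"
  using p1_orbit_ge[of z N] by (force simp: escape_set_def)

lemma escape_set_off_disc: "z \<in> escape_set R N \<Longrightarrow> 3/2 \<le> cmod (z + 1/2)"
  using disc_subset_filled_julia by (force simp: escape_set_def)

lemma escape_set_R2_borel [measurable]: "of_R2 -` escape_set R N \<in> sets borel"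
  using measurable_sets[OF of_R2_borel escape_set_borel] by simp

lemma lmeasurable_escape_set: "of_R2 -` escape_set R N \<in> lmeasurable"
proof (rule bounded_set_imp_lmeasurable)
  show "bounded (of_R2 -` escape_set R N)"
    unfolding bounded_iff using escape_set_bounded
    by (metis norm_of_R2 less_imp_le vimageE)
  show "of_R2 -` escape_set R N \<in> sets lebesgue"
    by (intro sets_completionI_sets) simp
qed

lemma emeasure_escape_set:
  "emeasure lborel (escape_set R N) = ennreal (measure lebesgue (of_R2 -` escape_set R N))"
proof -
  have "emeasure lborel (escape_set R N) = emeasure lebesgue (of_R2 -` escape_set R N)"
    by (simp add: emeasure_complex_eq_R2 emeasure_completion)
  then show ?thesis using lmeasurable_escape_set emeasure_eq_measure2 by metis
qed

(* On a piece of E_(N+1) where P^1 is injective, the Jacobian bound 9/4 together with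
   P^1(E_(N+1)) \<subseteq> E_N gives  |piece| \<le> 4/9 |E_N|. *)
lemma escape_set_piece_measure:
  assumes S: "S \<subseteq> of_R2 -` escape_set R (Suc N)" "S \<in> sets lebesgue"
    and inj: "inj_on (to_R2 \<circ> p1 \<circ> of_R2) S"
  shows "measure lebesgue S \<le> 4/9 * measure lebesgue (of_R2 -` escape_set R N)"
proof -
  have "S \<in> lmeasurable"
    using S lmeasurable_escape_set fmeasurableI2 by blast
  moreover have "(to_R2 \<circ> p1 \<circ> of_R2) ` S \<subseteq> of_R2 -` escape_set R N"
    using S(1) by (auto simp: escape_set_Suc)
  moreover have "9/4 \<le> \<bar>det (matrix (\<lambda>h. to_R2 ((of_R2 v + 1/2) * of_R2 h)))\<bar>" if "v \<in> S" for v
  proof -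
    have "(3/2)^2 \<le> (cmod (of_R2 v + 1/2))^2"
      using escape_set_off_disc S(1) that by (intro power_mono) auto
    then show ?thesis by (simp add: det_complex_mult_R2 power_divide)
  qed
  ultimately have "9/4 * measure lebesgue S \<le> measure lebesgue (of_R2 -` escape_set R N)"
    by (intro measure_le_image_measure[OF _ lmeasurable_escape_set _ has_derivative_complex_as_R2[OF p1_deriv] inj])
  then show ?thesis by simp
qed

(* Splitting E_(N+1) along the line Re z = -1/2 (a null set) into two injectivity
   half-planes gives the contraction by 8/9. *)
lemma escape_set_contraction:
  "measure lebesgue (of_R2 -` escape_set R (Suc N)) \<le> 8/9 * measure lebesgue (of_R2 -` escape_set R N)"
proof -
  let ?S = "of_R2 -` escape_set R (Suc N)"
  define S1 where "S1 = ?S \<inter> {v. v$1 > -1/2}"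
  define S2 where "S2 = ?S \<inter> {v. v$1 < -1/2}"
  define S0 where "S0 = ?S \<inter> {v. v$1 = -1/2}"
  have S: "?S \<in> sets lebesgue" using lmeasurable_escape_set by blast
  have L1: "S1 \<in> sets lebesgue" "S2 \<in> sets lebesgue" unfolding S1_def S2_def
    using S open_halfspace_component_gt_cart open_halfspace_component_lt_cart
    by (auto intro!: sets.Int borel_open)
  have "negligible S0"
  proof (rule negligible_subset)
    show "negligible {v::real^2. axis 1 1 \<bullet> v = -1/2}"
      by (rule negligible_hyperplane) (simp add: axis_eq_0_iff)
    show "S0 \<subseteq> {v::real^2. axis 1 1 \<bullet> v = -1/2}" by (auto simp: S0_def inner_axis')
  qed
  then have L0: "S0 \<in> sets lebesgue" and m0: "measure lebesgue S0 = 0"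
    using negligible_iff_null_sets negligible_imp_measure0 by blast+
  have "inj_on (to_R2 \<circ> p1 \<circ> of_R2) S1"
    using inj_on_as_R2[OF p1_inj_on_half_planes(1)] by (rule inj_on_subset) (auto simp: S1_def)
  then have m1: "measure lebesgue S1 \<le> 4/9 * measure lebesgue (of_R2 -` escape_set R N)"
    using L1 by (intro escape_set_piece_measure) (auto simp: S1_def)
  have "inj_on (to_R2 \<circ> p1 \<circ> of_R2) S2"
    using inj_on_as_R2[OF p1_inj_on_half_planes(2)] by (rule inj_on_subset) (auto simp: S2_def)
  then have m2: "measure lebesgue S2 \<le> 4/9 * measure lebesgue (of_R2 -` escape_set R N)"
    using L1 by (intro escape_set_piece_measure) (auto simp: S2_def)
  have "?S = (S1 \<union> S2) \<union> S0" by (auto simp: S1_def S2_def S0_def)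
  then have "measure lebesgue ?S \<le> measure lebesgue (S1 \<union> S2) + measure lebesgue S0"
    using measure_Un_le[of "S1 \<union> S2" lebesgue S0] L1 L0 by auto
  also have "\<dots> \<le> measure lebesgue S1 + measure lebesgue S2"
    using measure_Un_le[of S1 lebesgue S2] L1 m0 by auto
  finally show ?thesis using m1 m2 by linarith
qed

lemma escape_set_decay:
  "measure lebesgue (of_R2 -` escape_set R N) \<le> (8/9)^N * measure lebesgue (of_R2 -` escape_set R 0)"
proof (induction N)
  case (Suc N)
  then show ?case using escape_set_contraction[of R N] by (simp add: mult_left_mono)
qed simp

lemma escape_set_exponential_bound:
  "emeasure lborel (escape_set R N)
    < ennreal ((measure lebesgue (of_R2 -` escape_set R 0) + 1) * (9/8) powr (- real N))"
proof -
  have "measure lebesgue (of_R2 -` escape_set R N)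
      \<le> (8/9)^N * measure lebesgue (of_R2 -` escape_set R 0)"
    by (rule escape_set_decay)
  also have "\<dots> < (8/9)^N * (measure lebesgue (of_R2 -` escape_set R 0) + 1)"
    by simp
  also have "\<dots> = (measure lebesgue (of_R2 -` escape_set R 0) + 1) * (9/8) powr (- real N)"
    by (simp add: powr_minus powr_realpow power_one_over[symmetric] inverse_eq_divide)
  finally show ?thesis
    by (simp add: emeasure_escape_set ennreal_less_iff)
qed

lemma Qc_iterate:
  assumes "\<forall>j. 1 \<le> j \<and> j \<le> N \<longrightarrow> P j = P1" "n \<le> N"
  shows "Qc P 0 n z = (p1 ^^ n) z"
  using assms(2) by (induction n) (auto simp: assms(1))

theorem lemma2p1:
  shows "\<exists>lam::real. lam > 1 \<and>
    (\<forall>(d::nat) (K::real) (M::real) (R::real).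
       d \<ge> 2 \<longrightarrow> K \<ge> 2 \<longrightarrow> M \<ge> 1/2 \<longrightarrow> escape_radius d K M R \<longrightarrow>
       (\<exists>c::real. c > 0 \<and>
          (\<forall>P (N::nat). bounded_poly_seq d K M P \<longrightarrow> N \<ge> 1 \<longrightarrow>
             (\<forall>j. 1 \<le> j \<and> j \<le> N \<longrightarrow> P j = P1) \<longrightarrow>
             emeasure lborel ({z. Qc P 0 N z \<in> ball 0 R} - filled_julia P1)
               < ennreal (c * lam powr (- real N)))))"
proof (rule exI[of _ "9/8::real"], intro conjI allI impI)
  fix d :: nat and K M R :: real
  define c where "c = measure lebesgue (of_R2 -` escape_set R 0) + 1"
  have "c > 0"
    unfolding c_def by (simp add: add_nonneg_pos)
  moreover have "emeasure lborel ({z. Qc P 0 N z \<in> ball 0 R} - filled_julia P1)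
      < ennreal (c * (9/8) powr (- real N))"
    if "\<forall>j. 1 \<le> j \<and> j \<le> N \<longrightarrow> P j = P1" for P and N :: nat
  proof -
    have "{z. Qc P 0 N z \<in> ball 0 R} - filled_julia P1 = escape_set R N"
      using Qc_iterate[OF that order_refl] by (auto simp: escape_set_def)
    then show ?thesis
      using escape_set_exponential_bound[of R N] by (simp add: c_def)
  qed
  ultimately show "\<exists>c::real. c > 0 \<and>
      (\<forall>P (N::nat). bounded_poly_seq d K M P \<longrightarrow> N \<ge> 1 \<longrightarrow>
         (\<forall>j. 1 \<le> j \<and> j \<le> N \<longrightarrow> P j = P1) \<longrightarrow>
         emeasure lborel ({z. Qc P 0 N z \<in> ball 0 R} - filled_julia P1)
           < ennreal (c * (9/8) powr (- real N)))"
    by blast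
qed simp

end
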